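(* If a non-failed Boolean CSP is closed under the applications of (each of) the rules of the proof system BOOL', then it is hyper-arc consistent.
   Context: A Boolean CSP is $\langle \mathcal C; x_1\in D_1,\dots,x_n\in D_n\rangle$ with $D_i\subseteq\{0,1\}$ and $\mathcal C$ a finite set of Boolean constraints, each of the forms $u=v$ ($\{(0,0),(1,1)\}$), $\neg u=v$ ($\{(0,1),(1,0)\}$), $u\wedge v=w$ ($\{(0,0,0),(0,1,0),(1,0,0),(1,1,1)\}$), $u\vee v=w$ ($\{(0,0,0),(0,1,1),(1,0,1),(1,1,1)\}$) on distinct variables; constraints are always understood as restricted to the current domains. $x=d$ means $x\in\{d\}$. A CSP is failed if some domain is empty. A constraint is solved if it equals the product of the domains of its variables; $\phi$ is a reformulation of $\psi$ if removing solved constraints from both yields the same CSP. The proof system BOOL' consists of the rules (constraint, premise $\rightarrow$ conclusion; $x,y,z$ schematic): EQU1: $x=y$, $x=1\rightarrow y=1$; EQU2: $x=y$, $y=1\rightarrow x=1$; EQU3: $x=y$, $x=0\rightarrow y=0$; EQU4: $x=y$, $y=0\rightarrow x=0$; NOT1: $\neg x=y$, $x=1\rightarrow y=0$; NOT2: $\neg x=y$, $x=0\rightarrow y=1$; NOT3: $\neg x=y$, $y=1\rightarrow x=0$; NOT4: $\neg x=y$, $y=0\rightarrow x=1$; AND1': $x\wedge y=z$, $x=1\rightarrow$ constraint $y=z$; AND2': $x\wedge y=z$, $y=1\rightarrow$ constraint $x=z$; AND3': $x\wedge y=z$, $z=1\rightarrow x=1$; AND4: $x\wedge y=z$, $x=0\rightarrow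 z=0$; AND5: $x\wedge y=z$, $y=0\rightarrow z=0$; AND6': $x\wedge y=z$, $z=1\rightarrow y=1$; OR1: $x\vee y=z$, $x=1\rightarrow z=1$; OR2': $x\vee y=z$, $x=0\rightarrow$ constraint $y=z$; OR3': $x\vee y=z$, $y=0\rightarrow$ constraint $x=z$; OR4': $x\vee y=z$, $z=0\rightarrow x=0$; OR5: $x\vee y=z$, $y=1\rightarrow z=1$; OR6': $x\vee y=z$, $z=0\rightarrow y=0$. On CSPs: a rule with constraint $c$ and premise $X=s$ is applicable to a CSP containing (an instance of) $c$ in which each variable of $X$ has domain exactly $\{s_i\}$. If the conclusion is $Y=t$, the result removes $c$ and replaces the domain $D$ of each $y_j\in Y$ by $D\cap\{t_j\}$; if the conclusion is a constraint, the result replaces $c$ by that equality constraint (on the corresponding variables) and leaves domains unchanged. An application is relevant if its result is not a reformulation of the original CSP. A CSP is closed under the applications of a rule $R$ if $R$ cannot be applied or no application of it is relevant. A constraint is hyper-arc consistent if for every variable of it each value in its domain participates in a solution to the constraint (restricted to current domains); a CSP is hyper-arc consistent if every constraint of it is. *)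

theory Defs
  imports Main
begin

text \<open>Boolean values are rendered as bool (True = 1, False = 0).\<close>

datatype 'v constr =
    CEq 'v 'v
  | CNot 'v 'v
  | CAnd 'v 'v 'v
  | COr 'v 'v 'v

fun scheme :: "'v constr \<Rightarrow> 'v list" where
  "scheme (CEq u v) = [u, v]"
| "scheme (CNot u v) = [u, v]"
| "scheme (CAnd u v w) = [u, v, w]"
| "scheme (COr u v w) = [u, v, w]"

fun sat :: "'v constr \<Rightarrow> ('v \<Rightarrow> bool) \<Rightarrow> bool" where
  "sat (CEq u v) a = (a u = a v)"
| "sat (CNot u v) a = ((\<not> a u) = a v)"
| "sat (CAnd u v w) a = ((a u \<and> a v) = a w)"
| "sat (COr u v w) a = ((a u \<or> a v) = a w)"

text \<open>A Boolean CSP: a set of constraints together with domains (subsets of {0,1}).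
  The variables x1..xn of the CSP form a separate finite set X.\<close>
type_synonym 'v csp = "'v constr set \<times> ('v \<Rightarrow> bool set)"

definition well_formed :: "'v set \<Rightarrow> 'v csp \<Rightarrow> bool" where
  "well_formed X \<phi> \<longleftrightarrow> finite X \<and> finite (fst \<phi>) \<and>
     (\<forall>c \<in> fst \<phi>. distinct (scheme c) \<and> set (scheme c) \<subseteq> X)"

definition failed :: "'v set \<Rightarrow> 'v csp \<Rightarrow> bool" where
  "failed X \<phi> \<longleftrightarrow> (\<exists>x \<in> X. snd \<phi> x = {})"

definition in_doms :: "('v \<Rightarrow> bool set) \<Rightarrow> 'v constr \<Rightarrow> ('v \<Rightarrow> bool) \<Rightarrow> bool" where
  "in_doms D c a \<longleftrightarrow> (\<forall>v \<in> set (scheme c). a v \<in> D v)"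

definition restr :: "('v \<Rightarrow> bool set) \<Rightarrow> 'v constr \<Rightarrow> 'v list \<times> bool list set" where
  "restr D c = (scheme c, {map a (scheme c) | a. sat c a \<and> in_doms D c a})"

definition solved :: "('v \<Rightarrow> bool set) \<Rightarrow> 'v constr \<Rightarrow> bool" where
  "solved D c \<longleftrightarrow> (\<forall>a. in_doms D c a \<longrightarrow> sat c a)"

definition reformulation :: "'v set \<Rightarrow> 'v csp \<Rightarrow> 'v csp \<Rightarrow> bool" where
  "reformulation X \<phi> \<psi> \<longleftrightarrow>
     (\<forall>x \<in> X. snd \<phi> x = snd \<psi> x) \<and>
     restr (snd \<phi>) ` {c \<in> fst \<phi>. \<not> solved (snd \<phi>) c}
       = restr (snd \<psi>) ` {c \<in> fst \<psi>. \<not> solved (snd \<psi>) c}"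

datatype rule =
    EQU1 | EQU2 | EQU3 | EQU4
  | NOT1 | NOT2 | NOT3 | NOT4
  | AND1' | AND2' | AND3' | AND4 | AND5 | AND6'
  | OR1 | OR2' | OR3' | OR4' | OR5 | OR6'

datatype 'v conclusion = CDom "('v \<times> bool) list" | CCon "'v constr"

fun inst :: "rule \<Rightarrow> 'v constr \<Rightarrow> (('v \<times> bool) list \<times> 'v conclusion) option" where
  "inst EQU1 (CEq x y) = Some ([(x, True)], CDom [(y, True)])"
| "inst EQU2 (CEq x y) = Some ([(y, True)], CDom [(x, True)])"
| "inst EQU3 (CEq x y) = Some ([(x, False)], CDom [(y, False)])"
| "inst EQU4 (CEq x y) = Some ([(y, False)], CDom [(x, False)])"
| "inst NOT1 (CNot x y) = Some ([(x, True)], CDom [(y, False)])"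
| "inst NOT2 (CNot x y) = Some ([(x, False)], CDom [(y, True)])"
| "inst NOT3 (CNot x y) = Some ([(y, True)], CDom [(x, False)])"
| "inst NOT4 (CNot x y) = Some ([(y, False)], CDom [(x, True)])"
| "inst AND1' (CAnd x y z) = Some ([(x, True)], CCon (CEq y z))"
| "inst AND2' (CAnd x y z) = Some ([(y, True)], CCon (CEq x z))"
| "inst AND3' (CAnd x y z) = Some ([(z, True)], CDom [(x, True)])"
| "inst AND4 (CAnd x y z) = Some ([(x, False)], CDom [(z, False)])"
| "inst AND5 (CAnd x y z) = Some ([(y, False)], CDom [(z, False)])"
| "inst AND6' (CAnd x y z) = Some ([(z, True)], CDom [(y, True)])"
| "inst OR1 (COr x y z) = Some ([(x, True)], CDom [(z, True)])"
| "inst OR2' (COr x y z) = Some ([(x, False)], CCon (CEq y z))"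
| "inst OR3' (COr x y z) = Some ([(y, False)], CCon (CEq x z))"
| "inst OR4' (COr x y z) = Some ([(z, False)], CDom [(x, False)])"
| "inst OR5 (COr x y z) = Some ([(y, True)], CDom [(z, True)])"
| "inst OR6' (COr x y z) = Some ([(z, False)], CDom [(y, False)])"
| "inst _ _ = None"

fun apply_concl :: "'v constr \<Rightarrow> 'v conclusion \<Rightarrow> 'v csp \<Rightarrow> 'v csp" where
  "apply_concl c (CDom L) (C, D) =
     (C - {c}, \<lambda>v. D v \<inter> {t. \<forall>s. (v, s) \<in> set L \<longrightarrow> t = s})"
| "apply_concl c (CCon c') (C, D) = (insert c' (C - {c}), D)"

definition applies :: "rule \<Rightarrow> 'v csp \<Rightarrow> 'v csp \<Rightarrow> bool" where
  "applies R \<phi> \<psi> \<longleftrightarrow> (\<exists>c P K. c \<in> fst \<phi> \<and> inst R c = Some (P, K) \<and>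
       (\<forall>(x, s) \<in> set P. snd \<phi> x = {s}) \<and> \<psi> = apply_concl c K \<phi>)"

definition relevant :: "'v set \<Rightarrow> 'v csp \<Rightarrow> 'v csp \<Rightarrow> bool" where
  "relevant X \<phi> \<psi> \<longleftrightarrow> \<not> reformulation X \<psi> \<phi>"

definition closed_under :: "'v set \<Rightarrow> rule \<Rightarrow> 'v csp \<Rightarrow> bool" where
  "closed_under X R \<phi> \<longleftrightarrow> (\<forall>\<psi>. applies R \<phi> \<psi> \<longrightarrow> \<not> relevant X \<phi> \<psi>)"

definition hac_constr :: "('v \<Rightarrow> bool set) \<Rightarrow> 'v constr \<Rightarrow> bool" where
  "hac_constr D c \<longleftrightarrow> (\<forall>v \<in> set (scheme c). \<forall>d \<in> D v.
      \<exists>a. a v = d \<and> in_doms D c a \<and> sat c a)"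

definition hyper_arc_consistent :: "'v csp \<Rightarrow> bool" where
  "hyper_arc_consistent \<phi> \<longleftrightarrow> (\<forall>c \<in> fst \<phi>. hac_constr (snd \<phi>) c)"

end

theory Submission
  imports Defs
begin

text \<open>Closure under a rule means that each of its applications with a satisfied premise
  yields a reformulation. For a rule concluding \<open>v = t\<close> this says that the domain of \<open>v\<close>
  already lies within \<open>{t}\<close>. For AND1', AND2', OR2' and OR3', which conclude an equality
  \<open>y = z\<close>, it says that \<open>y = z\<close> is either solved or, because on non-empty domains its
  restriction differs from that of \<open>\<not> y = z\<close>, already a constraint of the CSP; either way
  closure under EQU1--EQU4 gives equal domains for \<open>y\<close> and \<open>z\<close>. A case analysis over the three
  non-empty subsets of \<open>{0, 1}\<close> for each variable then shows that these consequences leave no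
  unsupported value in any constraint.\<close>

lemma nonempty_bool_set_cases:
  fixes A :: "bool set"
  assumes "A \<noteq> {}"
  obtains "A = {True}" | "A = {False}" | "A = UNIV"
proof -
  have "A \<in> Pow UNIV" by simp
  then have "A \<in> {{}, {True}, {False}, UNIV}" unfolding UNIV_bool Pow_insert Pow_empty by auto
  with assms that show thesis by auto
qed

lemma nonempty_bool_sets_eqI:
  fixes A B :: "bool set"
  assumes "A \<noteq> {}" and "B \<noteq> {}"
    and "\<And>t. A = {t} \<Longrightarrow> B \<subseteq> {t}" and "\<And>t. B = {t} \<Longrightarrow> A \<subseteq> {t}"
  shows "A = B"
  using assms(1) proof (cases rule: nonempty_bool_set_cases)
  case 1 then show ?thesis using assms(2,3) by blast
next
  case 2 then show ?thesis using assms(2,3) by blast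
next
  case 3
  with assms(2,4) show ?thesis by (cases rule: nonempty_bool_set_cases) auto
qed

lemma negation_supported:
  fixes A B :: "bool set"
  assumes "A \<noteq> {}" and "B \<noteq> {}"
    and "\<And>t. A = {t} \<Longrightarrow> B \<subseteq> {\<not> t}" and "\<And>t. B = {t} \<Longrightarrow> A \<subseteq> {\<not> t}"
  shows "(\<forall>p\<in>A. \<exists>q\<in>B. (\<not> p) = q) \<and> (\<forall>q\<in>B. \<exists>p\<in>A. (\<not> p) = q)"
  using assms(3,4)[of True] assms(3,4)[of False]
  by (cases rule: nonempty_bool_set_cases[OF assms(1)];
      cases rule: nonempty_bool_set_cases[OF assms(2)]) (simp_all add: UNIV_bool ex_bool_eq all_bool_eq)

lemma conjunction_supported:
  fixes A B C :: "bool set"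
  assumes "A \<noteq> {}" and "B \<noteq> {}" and "C \<noteq> {}"
    and "A = {False} \<Longrightarrow> C \<subseteq> {False}" and "B = {False} \<Longrightarrow> C \<subseteq> {False}"
    and "C = {True} \<Longrightarrow> A \<subseteq> {True}" and "C = {True} \<Longrightarrow> B \<subseteq> {True}"
    and "A = {True} \<Longrightarrow> B = C" and "B = {True} \<Longrightarrow> A = C"
  shows "(\<forall>p\<in>A. \<exists>q\<in>B. \<exists>r\<in>C. (p \<and> q) = r) \<and> (\<forall>q\<in>B. \<exists>p\<in>A. \<exists>r\<in>C. (p \<and> q) = r) \<and>
    (\<forall>r\<in>C. \<exists>p\<in>A. \<exists>q\<in>B. (p \<and> q) = r)"
  using assms
  by (cases rule: nonempty_bool_set_cases[OF assms(1)];
      cases rule: nonempty_bool_set_cases[OF assms(2)];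
      cases rule: nonempty_bool_set_cases[OF assms(3)]) (simp_all add: UNIV_bool ex_bool_eq all_bool_eq)

lemma disjunction_supported:
  fixes A B C :: "bool set"
  assumes "A \<noteq> {}" and "B \<noteq> {}" and "C \<noteq> {}"
    and "A = {True} \<Longrightarrow> C \<subseteq> {True}" and "B = {True} \<Longrightarrow> C \<subseteq> {True}"
    and "C = {False} \<Longrightarrow> A \<subseteq> {False}" and "C = {False} \<Longrightarrow> B \<subseteq> {False}"
    and "A = {False} \<Longrightarrow> B = C" and "B = {False} \<Longrightarrow> A = C"
  shows "(\<forall>p\<in>A. \<exists>q\<in>B. \<exists>r\<in>C. (p \<or> q) = r) \<and> (\<forall>q\<in>B. \<exists>p\<in>A. \<exists>r\<in>C. (p \<or> q) = r) \<and>
    (\<forall>r\<in>C. \<exists>p\<in>A. \<exists>q\<in>B. (p \<or> q) = r)"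
  using assms
  by (cases rule: nonempty_bool_set_cases[OF assms(1)];
      cases rule: nonempty_bool_set_cases[OF assms(2)];
      cases rule: nonempty_bool_set_cases[OF assms(3)]) (simp_all add: UNIV_bool ex_bool_eq all_bool_eq)

lemma hac_constr_binary_iff:
  assumes "x \<noteq> y" and "scheme c = [x, y]" and "\<And>a. sat c a \<longleftrightarrow> f (a x) (a y)"
  shows "hac_constr D c \<longleftrightarrow> (\<forall>p\<in>D x. \<exists>q\<in>D y. f p q) \<and> (\<forall>q\<in>D y. \<exists>p\<in>D x. f p q)"
    (is "_ \<longleftrightarrow> ?supported")
proof
  assume "hac_constr D c"
  then show ?supported
    unfolding hac_constr_def in_doms_def assms(2,3) by fastforce
next
  assume supported: ?supported
  show "hac_constr D c"
    unfolding hac_constr_def in_doms_def assms(2,3)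
  proof (intro ballI)
    fix v d assume "v \<in> set [x, y]" and "d \<in> D v"
    then consider "v = x" "d \<in> D x" | "v = y" "d \<in> D y" by auto
    then show "\<exists>a. a v = d \<and> (\<forall>w\<in>set [x, y]. a w \<in> D w) \<and> f (a x) (a y)"
    proof cases
      case 1
      with supported obtain q where "q \<in> D y" "f d q" by blast
      with 1 show ?thesis using assms(1) by (intro exI[of _ "(\<lambda>_. q)(x := d)"]) auto
    next
      case 2
      with supported obtain p where "p \<in> D x" "f p d" by blast
      with 2 show ?thesis using assms(1) by (intro exI[of _ "(\<lambda>_. d)(x := p)"]) auto
    qed
  qed
qed

lemma hac_constr_ternary_iff:
  assumes "distinct [x, y, z]" and "scheme c = [x, y, z]"
    and "\<And>a. sat c a \<longleftrightarrow> f (a x) (a y) (a z)"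
  shows "hac_constr D c \<longleftrightarrow>
    (\<forall>p\<in>D x. \<exists>q\<in>D y. \<exists>r\<in>D z. f p q r) \<and> (\<forall>q\<in>D y. \<exists>p\<in>D x. \<exists>r\<in>D z. f p q r) \<and>
    (\<forall>r\<in>D z. \<exists>p\<in>D x. \<exists>q\<in>D y. f p q r)"
    (is "_ \<longleftrightarrow> ?supported")
proof
  assume "hac_constr D c"
  then show ?supported
    unfolding hac_constr_def in_doms_def assms(2,3) by fastforce
next
  assume supported: ?supported
  show "hac_constr D c"
    unfolding hac_constr_def in_doms_def assms(2,3)
  proof (intro ballI)
    fix v d assume "v \<in> set [x, y, z]" and "d \<in> D v"
    then consider "v = x" "d \<in> D x" | "v = y" "d \<in> D y" | "v = z" "d \<in> D z" by auto
    then show "\<exists>a. a v = d \<and> (\<forall>w\<in>set [x, y, z]. a w \<in> D w) \<and> f (a x) (a y) (a z)"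
    proof cases
      case 1
      with supported obtain q r where "q \<in> D y" "r \<in> D z" "f d q r" by blast
      with 1 show ?thesis using assms(1) by (intro exI[of _ "(\<lambda>_. r)(x := d, y := q)"]) auto
    next
      case 2
      with supported obtain p r where "p \<in> D x" "r \<in> D z" "f p d r" by blast
      with 2 show ?thesis using assms(1) by (intro exI[of _ "(\<lambda>_. r)(x := p, y := d)"]) auto
    next
      case 3
      with supported obtain p q where "p \<in> D x" "q \<in> D y" "f p q d" by blast
      with 3 show ?thesis using assms(1) by (intro exI[of _ "(\<lambda>_. d)(x := p, y := q)"]) auto
    qed
  qed
qed

lemma restr_eq_CEq:
  assumes "y \<noteq> z" and "D y \<noteq> {}" and "D z \<noteq> {}" and "restr D c = restr D (CEq y z)"
  shows "c = CEq y z"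
proof -
  obtain "scheme c = [y, z]" and tuples: "{map a (scheme c) | a. sat c a \<and> in_doms D c a}
     = {map a [y, z] | a. sat (CEq y z) a \<and> in_doms D (CEq y z) a}"
    using assms(4) unfolding restr_def prod.inject scheme.simps by blast
  moreover have "c \<noteq> CNot y z"
  proof
    assume [simp]: "c = CNot y z"
    obtain p q where "p \<in> D y" and "q \<in> D z" using assms(2,3) by blast
    show False
    proof (cases "p = q")
      case True
      with \<open>p \<in> D y\<close> \<open>q \<in> D z\<close>
      have "[p, p] \<in> {map a [y, z] | a. sat (CEq y z) a \<and> in_doms D (CEq y z) a}"
        by (auto simp: in_doms_def intro!: exI[of _ "\<lambda>_. p"])
      then show False unfolding tuples[symmetric] by auto
    next
      case False
      with \<open>p \<in> D y\<close> \<open>q \<in> D z\<close> \<open>y \<noteq> z\<close>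
      have "[p, q] \<in> {map a (scheme c) | a. sat c a \<and> in_doms D c a}"
        by (auto simp: in_doms_def intro!: exI[of _ "(\<lambda>_. q)(y := p)"])
      with False show False unfolding tuples by auto
    qed
  qed
  ultimately show ?thesis by (cases c) auto
qed

lemma closed_under_domain_rule:
  assumes "inst R c = Some ([(u, s)], CDom [(v, t)])"
    and "closed_under X R (C, D)" and "c \<in> C" and "D u = {s}" and "v \<in> X"
  shows "D v \<subseteq> {t}"
proof -
  have "applies R (C, D) (apply_concl c (CDom [(v, t)]) (C, D))"
    unfolding applies_def using assms(1,3,4) by fastforce
  with assms(2) have "reformulation X (apply_concl c (CDom [(v, t)]) (C, D)) (C, D)"
    unfolding closed_under_def relevant_def by blast
  then have "\<forall>w\<in>X. D w \<inter> {t'. w = v \<longrightarrow> t' = t} = D w"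
    unfolding reformulation_def by simp
  with \<open>v \<in> X\<close> show ?thesis by blast
qed

lemma closed_under_constraint_rule:
  assumes "inst R c = Some ([(u, s)], CCon c')"
    and "closed_under X R (C, D)" and "c \<in> C" and "D u = {s}"
  shows "solved D c' \<or> (\<exists>c''\<in>C. restr D c'' = restr D c')"
proof -
  have "applies R (C, D) (apply_concl c (CCon c') (C, D))"
    unfolding applies_def using assms(1,3,4) by fastforce
  with assms(2) have "reformulation X (apply_concl c (CCon c') (C, D)) (C, D)"
    unfolding closed_under_def relevant_def by blast
  then have image_eq:
    "restr D ` {e \<in> insert c' (C - {c}). \<not> solved D e} = restr D ` {e \<in> C. \<not> solved D e}"
    unfolding reformulation_def apply_concl.simps fst_conv snd_conv by (rule conjunct2)
  show ?thesis
  proof (cases "solved D c'")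
    case False
    then have "restr D c' \<in> restr D ` {e \<in> insert c' (C - {c}). \<not> solved D e}" by blast
    then have "restr D c' \<in> restr D ` {e \<in> C. \<not> solved D e}" by (simp only: image_eq)
    then obtain c'' where "c'' \<in> C" and "restr D c' = restr D c''" by blast
    then show ?thesis by auto
  qed simp
qed

lemma domains_eq_if_CEq_closed:
  assumes closed: "\<And>R. closed_under X R (C, D)" and c: "CEq x y \<in> C"
    and "x \<in> X" and "y \<in> X" and "D x \<noteq> {}" and "D y \<noteq> {}"
  shows "D x = D y"
proof (rule nonempty_bool_sets_eqI)
  fix t
  show "D y \<subseteq> {t}" if "D x = {t}"
    using closed_under_domain_rule[of "if t then EQU1 else EQU3" "CEq x y" x t y t,
        OF _ closed c that \<open>y \<in> X\<close>] by simp
  show "D x \<subseteq> {t}" if "D y = {t}"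
    using closed_under_domain_rule[of "if t then EQU2 else EQU4" "CEq x y" y t x t,
        OF _ closed c that \<open>x \<in> X\<close>] by simp
qed fact+

lemma closed_under_equality_rule:
  assumes "inst R c = Some ([(u, s)], CCon (CEq y z))"
    and closed: "\<And>R. closed_under X R (C, D)" and "c \<in> C" and "D u = {s}"
    and "y \<noteq> z" and "y \<in> X" and "z \<in> X" and "D y \<noteq> {}" and "D z \<noteq> {}"
  shows "D y = D z"
  using closed_under_constraint_rule[OF assms(1) closed assms(3,4)]
proof
  assume solved: "solved D (CEq y z)"
  have "p = q" if "p \<in> D y" and "q \<in> D z" for p q
  proof -
    have "in_doms D (CEq y z) ((\<lambda>_. q)(y := p))"
      using that \<open>y \<noteq> z\<close> by (simp add: in_doms_def)
    with solved have "sat (CEq y z) ((\<lambda>_. q)(y := p))"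
      unfolding solved_def by blast
    with \<open>y \<noteq> z\<close> show "p = q" by simp
  qed
  with \<open>D y \<noteq> {}\<close> \<open>D z \<noteq> {}\<close> show ?thesis by blast
next
  assume "\<exists>c''\<in>C. restr D c'' = restr D (CEq y z)"
  then obtain c'' where "c'' \<in> C" and "restr D c'' = restr D (CEq y z)" by blast
  moreover from this(2) have "c'' = CEq y z" by (rule restr_eq_CEq[OF assms(5,8,9)])
  ultimately have "CEq y z \<in> C" by simp
  from domains_eq_if_CEq_closed[OF closed this assms(6-9)] show ?thesis .
qed

lemma hac_constr_CEq_if_closed:
  assumes closed: "\<And>R. closed_under X R (C, D)" and nonempty: "\<forall>v\<in>X. D v \<noteq> {}"
    and c: "CEq x y \<in> C" and "x \<noteq> y" and "x \<in> X" and "y \<in> X"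
  shows "hac_constr D (CEq x y)"
proof -
  have "D x = D y"
    using domains_eq_if_CEq_closed[OF closed c] nonempty \<open>x \<in> X\<close> \<open>y \<in> X\<close> by blast
  then show ?thesis
    unfolding hac_constr_binary_iff[of x y "CEq x y" "(=)", OF \<open>x \<noteq> y\<close> scheme.simps(1) sat.simps(1)]
    by blast
qed

lemma hac_constr_CNot_if_closed:
  assumes closed: "\<And>R. closed_under X R (C, D)" and nonempty: "\<forall>v\<in>X. D v \<noteq> {}"
    and c: "CNot x y \<in> C" and "x \<noteq> y" and "x \<in> X" and "y \<in> X"
  shows "hac_constr D (CNot x y)"
  unfolding hac_constr_binary_iff[of x y "CNot x y" "\<lambda>p q. (\<not> p) = q", OF \<open>x \<noteq> y\<close> scheme.simps(2) sat.simps(2)]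
proof (rule negation_supported)
  fix t
  show "D y \<subseteq> {\<not> t}" if "D x = {t}"
    using closed_under_domain_rule[of "if t then NOT1 else NOT2" "CNot x y" x t y "\<not> t",
        OF _ closed c that \<open>y \<in> X\<close>] by simp
  show "D x \<subseteq> {\<not> t}" if "D y = {t}"
    using closed_under_domain_rule[of "if t then NOT3 else NOT4" "CNot x y" y t x "\<not> t",
        OF _ closed c that \<open>x \<in> X\<close>] by simp
qed (use nonempty \<open>x \<in> X\<close> \<open>y \<in> X\<close> in blast)+

lemma hac_constr_CAnd_if_closed:
  assumes closed: "\<And>R. closed_under X R (C, D)" and nonempty: "\<forall>v\<in>X. D v \<noteq> {}"
    and c: "CAnd x y z \<in> C" and distinct: "distinct [x, y, z]" and X: "x \<in> X" "y \<in> X" "z \<in> X"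
  shows "hac_constr D (CAnd x y z)"
  unfolding hac_constr_ternary_iff[of x y z "CAnd x y z" "\<lambda>p q r. (p \<and> q) = r",
      OF distinct scheme.simps(3) sat.simps(3)]
proof (rule conjunction_supported)
  show "D z \<subseteq> {False}" if "D x = {False}"
    using closed_under_domain_rule[of AND4 "CAnd x y z" x False z False,
        OF _ closed c that \<open>z \<in> X\<close>] by simp
  show "D z \<subseteq> {False}" if "D y = {False}"
    using closed_under_domain_rule[of AND5 "CAnd x y z" y False z False,
        OF _ closed c that \<open>z \<in> X\<close>] by simp
  show "D x \<subseteq> {True}" if "D z = {True}"
    using closed_under_domain_rule[of AND3' "CAnd x y z" z True x True,
        OF _ closed c that \<open>x \<in> X\<close>] by simp
  show "D y \<subseteq> {True}" if "D z = {True}"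
    using closed_under_domain_rule[of AND6' "CAnd x y z" z True y True,
        OF _ closed c that \<open>y \<in> X\<close>] by simp
  show "D y = D z" if "D x = {True}"
    using closed_under_equality_rule[of AND1' "CAnd x y z" x True y z, OF _ closed c that]
      distinct X nonempty by simp
  show "D x = D z" if "D y = {True}"
    using closed_under_equality_rule[of AND2' "CAnd x y z" y True x z, OF _ closed c that]
      distinct X nonempty by simp
qed (use nonempty X in blast)+

lemma hac_constr_COr_if_closed:
  assumes closed: "\<And>R. closed_under X R (C, D)" and nonempty: "\<forall>v\<in>X. D v \<noteq> {}"
    and c: "COr x y z \<in> C" and distinct: "distinct [x, y, z]" and X: "x \<in> X" "y \<in> X" "z \<in> X"
  shows "hac_constr D (COr x y z)"
  unfolding hac_constr_ternary_iff[of x y z "COr x y z" "\<lambda>p q r. (p \<or> q) = r",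
      OF distinct scheme.simps(4) sat.simps(4)]
proof (rule disjunction_supported)
  show "D z \<subseteq> {True}" if "D x = {True}"
    using closed_under_domain_rule[of OR1 "COr x y z" x True z True,
        OF _ closed c that \<open>z \<in> X\<close>] by simp
  show "D z \<subseteq> {True}" if "D y = {True}"
    using closed_under_domain_rule[of OR5 "COr x y z" y True z True,
        OF _ closed c that \<open>z \<in> X\<close>] by simp
  show "D x \<subseteq> {False}" if "D z = {False}"
    using closed_under_domain_rule[of OR4' "COr x y z" z False x False,
        OF _ closed c that \<open>x \<in> X\<close>] by simp
  show "D y \<subseteq> {False}" if "D z = {False}"
    using closed_under_domain_rule[of OR6' "COr x y z" z False y False,
        OF _ closed c that \<open>y \<in> X\<close>] by simp
  show "D y = D z" if "D x = {False}"
    using closed_under_equality_rule[of OR2' "COr x y z" x False y z, OF _ closed c that]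
      distinct X nonempty by simp
  show "D x = D z" if "D y = {False}"
    using closed_under_equality_rule[of OR3' "COr x y z" y False x z, OF _ closed c that]
      distinct X nonempty by simp
qed (use nonempty X in blast)+

theorem theorem5:
  fixes X :: "'v set" and \<phi> :: "'v csp"
  assumes "well_formed X \<phi>"
    and "\<not> failed X \<phi>"
    and "\<forall>R. closed_under X R \<phi>"
  shows "hyper_arc_consistent \<phi>"
proof -
  obtain C D where \<phi>: "\<phi> = (C, D)" by (cases \<phi>)
  have closed: "closed_under X R (C, D)" for R
    using assms(3) \<phi> by simp
  have nonempty: "\<forall>v\<in>X. D v \<noteq> {}"
    using assms(2) \<phi> unfolding failed_def by auto
  have "hac_constr D c" if "c \<in> C" for c
  proof -
    from that assms(1) \<phi> have "distinct (scheme c)" and "set (scheme c) \<subseteq> X"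
      unfolding well_formed_def by auto
    with that show ?thesis
      using hac_constr_CEq_if_closed[OF closed nonempty] hac_constr_CNot_if_closed[OF closed nonempty]
        hac_constr_CAnd_if_closed[OF closed nonempty] hac_constr_COr_if_closed[OF closed nonempty]
      by (cases c) auto
  qed
  then show ?thesis
    unfolding hyper_arc_consistent_def \<phi> by simp
qed

end
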